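(* Let $\theta$ be an irrational number whose best rational approximants $(p_n/q_n)_{n\ge0}$ satisfy $\lim_{n\to\infty}q_n^{-1}\log q_{n+1}=\infty$, and let $q'$ be a subsequence of $(q_n)_{n\ge0}$. Then there exists a dense $G_\delta$-subset $E_1$ of $l^\infty$ such that for every $u\in E_1$: $\mathbb{C}\times\Delta$ is a Fatou component of $A_{\theta,q',u}$, and for every $(w,z)\in\mathbb{C}^2$ with $|z|>1$ the forward orbit of $(w,z)$ under $A_{\theta,q',u}$ is unbounded. The same two conclusions hold for $A_{\theta,q'}$, i.e. for the constant sequence $u_m\equiv1$.
   Context: Best rational approximants $p_n/q_n$ of an irrational $\theta$ are its continued fraction convergents, with $\gcd(p_n,q_n)=1$, $q_n\ge0$. A subsequence $q'$ of $(q_n)$ means $q'_n=q_{k_n}$ with $k_n$ strictly increasing. $l^\infty$ is the complex Banach space of bounded complex sequences $u=(u_m)_{m\ge0}$ with the sup norm. $\Delta$ is the open unit disc. For $u\in l^\infty$, $\varphi_{\theta,q',u}(z)=z e^{2\pi i\theta}\sum_{n=0}^\infty u_{q'_n}(1-e^{2\pi i q'_n\theta})z^{q'_n}$ (an entire function under the growth hypothesis), and $A_{\theta,q',u}(w,z)=(e^{2\pi i\theta}w+\varphi_{\theta,q',u}(z),e^{2\pi i\theta}z)$, an automorphism of $\mathbb{C}^2$; $A_{\theta,q'}$ denotes $A_{\theta,q',u}$ with $u_m\equiv1$. For a holomorphic map $F:\mathbb{C}^2\to\mathbb{C}^2$, the Fatou set is the set of points having a neighbourhood on which the family of iterates $\{F^{\circ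 N}\}_{N\ge0}$ is equicontinuous (Euclidean metric); a Fatou component is a connected component of the Fatou set. *)

theory Defs
  imports "HOL-Analysis.Analysis"
begin

fun cf_rem :: "real \<Rightarrow> nat \<Rightarrow> real" where
  "cf_rem x 0 = x"
| "cf_rem x (Suc n) = 1 / (cf_rem x n - of_int \<lfloor>cf_rem x n\<rfloor>)"

definition cf_a :: "real \<Rightarrow> nat \<Rightarrow> int" where
  "cf_a x n = \<lfloor>cf_rem x n\<rfloor>"

fun cf_q :: "real \<Rightarrow> nat \<Rightarrow> int" where
  "cf_q x 0 = 1"
| "cf_q x (Suc 0) = cf_a x 1"
| "cf_q x (Suc (Suc n)) = cf_a x (Suc (Suc n)) * cf_q x (Suc n) + cf_q x n"

text \<open>The entire function phi_{theta,q',u}; qs is the subsequence q'.\<close>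
definition phi :: "real \<Rightarrow> (nat \<Rightarrow> nat) \<Rightarrow> (nat \<Rightarrow> complex) \<Rightarrow> complex \<Rightarrow> complex" where
  "phi \<theta> qs u z = z * exp (2 * pi * \<i> * \<theta>) *
     (\<Sum>n. u (qs n) * (1 - exp (2 * pi * \<i> * of_nat (qs n) * \<theta>)) * z ^ qs n)"

definition A_map :: "real \<Rightarrow> (nat \<Rightarrow> nat) \<Rightarrow> (nat \<Rightarrow> complex) \<Rightarrow> complex \<times> complex \<Rightarrow> complex \<times> complex" where
  "A_map \<theta> qs u = (\<lambda>(w, z). (exp (2 * pi * \<i> * \<theta>) * w + phi \<theta> qs u z, exp (2 * pi * \<i> * \<theta>) * z))"

definition fatou_set :: "('a::metric_space \<Rightarrow> 'a) \<Rightarrow> 'a set" where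
  "fatou_set F = {x. \<exists>U. open U \<and> x \<in> U \<and>
     (\<forall>y\<in>U. \<forall>e>0. \<exists>d>0. \<forall>y'\<in>U. dist y' y < d \<longrightarrow> (\<forall>N. dist ((F ^^ N) y') ((F ^^ N) y) < e))}"

definition is_fatou_component :: "('a::metric_space \<Rightarrow> 'a) \<Rightarrow> 'a set \<Rightarrow> bool" where
  "is_fatou_component F S \<longleftrightarrow> S \<in> components (fatou_set F)"

end

theory Submission
  imports Defs "HOL-Real_Asymp.Real_Asymp"
begin

text \<open>
  Put \<lambda> = exp(2\<pi>i\<theta>). The iterates are A^N(w, z) = (\<lambda>^N (w + H_N(z)), \<lambda>^N z) with
  H_N(z) = \<Sigma>_j u(q'_j) z^(q'_j + 1) (1 - \<lambda>^(N q'_j)). Since |1 - \<lambda>^(N q'_j)| \<le> 2\<pi>N \<Parallel>q'_j \<theta>\<Parallel>,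
  \<Parallel>q'_j \<theta>\<Parallel> < 1/q_(k_j + 1) and log q_(n+1) / q_n \<rightarrow> \<infinity>, the series converges for every z.
  For |z| < 1 it is bounded and Lipschitz in z uniformly in N, so \<complex> \<times> \<Delta> lies in the Fatou set.
  For |z| > 1 and |u| \<ge> r > 0, choose N with N \<Parallel>q'_m \<theta>\<Parallel> \<in> [1/4, 1/2]: the m-th term
  then has modulus at least r |z|^(q'_m + 1), the earlier terms add up to O(m |z|^(q'_(m-1) + 1))
  where q'_m \<ge> 3 q'_(m-1) for large m, and the later ones are summably small (they only see
  N \<le> q'_j); so H_N(z), and with it the orbit, is unbounded. Every point of the circle |z| = 1
  is approached by points with bounded orbits and by points with unbounded orbits, which
  equicontinuity forbids; hence \<complex> \<times> \<Delta> is a whole Fatou component. Sequences bounded away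
  from 0 form an open dense set.
\<close>

section \<open>Continued fractions\<close>

declare cf_rem.simps(2)[simp del]

lemma cf_rem_Suc: "cf_rem x (Suc n) = 1 / (cf_rem x n - of_int (cf_a x n))"
  by (simp add: cf_a_def cf_rem.simps)

lemma cf_frac_less_1: "cf_rem x n - of_int (cf_a x n) < 1"
  unfolding cf_a_def by linarith

text \<open>\<open>cf_delta x n = |q_n x - p_n|\<close> is the distance of \<open>q_n x\<close> to the nearest integer,
  see \<open>cf_q_approx\<close>.\<close>
definition cf_delta :: "real \<Rightarrow> nat \<Rightarrow> real" where
  "cf_delta x n = (\<Prod>i\<in>{1..Suc n}. 1 / cf_rem x i)"

lemma cf_delta_0: "cf_delta x 0 = 1 / cf_rem x 1"
  unfolding cf_delta_def by simp

lemma cf_delta_Suc: "cf_delta x (Suc n) = cf_delta x n / cf_rem x (Suc (Suc n))"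
  unfolding cf_delta_def by (simp add: prod.nat_ivl_Suc' divide_inverse mult.commute)

context
  fixes \<theta> :: real
  assumes irrational: "\<theta> \<notin> \<rat>"
begin

lemma cf_rem_irrational: "cf_rem \<theta> n \<notin> \<rat>"
proof (induction n)
  case 0
  then show ?case using irrational by simp
next
  case (Suc n)
  show ?case
  proof
    assume "cf_rem \<theta> (Suc n) \<in> \<rat>"
    then have "of_int (cf_a \<theta> n) + 1 / cf_rem \<theta> (Suc n) \<in> \<rat>"
      by (intro Rats_add Rats_divide) auto
    moreover have "of_int (cf_a \<theta> n) + 1 / cf_rem \<theta> (Suc n) = cf_rem \<theta> n"
      unfolding cf_rem_Suc by simp
    ultimately show False using Suc by simp
  qed
qed

lemma cf_frac_pos: "0 < cf_rem \<theta> n - of_int (cf_a \<theta> n)"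
proof -
  have "cf_rem \<theta> n \<noteq> of_int (cf_a \<theta> n)"
    using cf_rem_irrational[of n] by (metis Rats_of_int)
  then show ?thesis unfolding cf_a_def using of_int_floor_le[of "cf_rem \<theta> n"] by linarith
qed

lemma cf_rem_Suc_gt_1: "1 < cf_rem \<theta> (Suc n)"
  using cf_frac_pos[of n] cf_frac_less_1[of \<theta> n] unfolding cf_rem_Suc by (simp add: field_simps)

lemma cf_rem_Suc_pos: "0 < cf_rem \<theta> (Suc n)"
  using cf_rem_Suc_gt_1[of n] by linarith

lemma cf_a_pos: "0 < n \<Longrightarrow> 1 \<le> cf_a \<theta> n"
  using cf_rem_Suc_gt_1[of "n - 1"] unfolding cf_a_def by (cases n) auto

lemma cf_rem_unfold: "cf_rem \<theta> n = of_int (cf_a \<theta> n) + 1 / cf_rem \<theta> (Suc n)"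
  using cf_frac_pos[of n] unfolding cf_rem_Suc by simp

lemma cf_q_pos_le_Suc: "1 \<le> cf_q \<theta> n \<and> cf_q \<theta> n \<le> cf_q \<theta> (Suc n)"
proof (induction n)
  case 0
  then show ?case using cf_a_pos[of 1] by simp
next
  case (Suc n)
  have "cf_q \<theta> (Suc n) \<le> cf_a \<theta> (Suc (Suc n)) * cf_q \<theta> (Suc n)"
    using Suc cf_a_pos[of "Suc (Suc n)"] by (simp add: mult_le_cancel_right1)
  moreover have "0 \<le> cf_q \<theta> n"
    using Suc by linarith
  ultimately show ?case
    using Suc unfolding cf_q.simps(3) by (intro conjI) linarith+
qed

lemma cf_q_pos: "1 \<le> cf_q \<theta> n"
  using cf_q_pos_le_Suc by blast

lemma cf_q_mono: "m \<le> n \<Longrightarrow> cf_q \<theta> m \<le> cf_q \<theta> n"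
  using lift_Suc_mono_le[of "cf_q \<theta>"] cf_q_pos_le_Suc by blast

lemma cf_q_ge_index: "int n \<le> cf_q \<theta> n"
proof -
  have "int n \<le> cf_q \<theta> n \<and> int (Suc n) \<le> cf_q \<theta> (Suc n)"
  proof (induction n)
    case 0
    then show ?case using cf_a_pos[of 1] by simp
  next
    case (Suc n)
    have "cf_q \<theta> (Suc n) \<le> cf_a \<theta> (Suc (Suc n)) * cf_q \<theta> (Suc n)"
      using cf_q_pos[of "Suc n"] cf_a_pos[of "Suc (Suc n)"] by (simp add: mult_le_cancel_right1)
    moreover have "1 \<le> cf_q \<theta> n"
      by (rule cf_q_pos)
    ultimately show ?case
      using Suc unfolding cf_q.simps(3) by (intro conjI) linarith+
  qed
  then show ?thesis ..
qed

lemma cf_delta_pos: "0 < cf_delta \<theta> n"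
  by (induction n) (simp_all add: cf_delta_0 cf_delta_Suc cf_rem_Suc_pos)

lemma cf_delta_step:
  "c - of_int (cf_a \<theta> (Suc n)) * (c / cf_rem \<theta> (Suc n)) = c / cf_rem \<theta> (Suc n) / cf_rem \<theta> (Suc (Suc n))"
proof -
  have "cf_rem \<theta> (Suc n) - of_int (cf_a \<theta> (Suc n)) = 1 / cf_rem \<theta> (Suc (Suc n))"
    using cf_rem_unfold[of "Suc n"] by simp
  then show ?thesis
    using cf_rem_Suc_pos[of n] by (simp add: field_simps)
qed

lemma cf_q_approx: "\<exists>p::int. of_int (cf_q \<theta> n) * \<theta> - of_int p = (-1) ^ n * cf_delta \<theta> n"
proof -
  have "(\<exists>p::int. of_int (cf_q \<theta> n) * \<theta> - of_int p = (-1) ^ n * cf_delta \<theta> n) \<and>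
        (\<exists>p::int. of_int (cf_q \<theta> (Suc n)) * \<theta> - of_int p = (-1) ^ Suc n * cf_delta \<theta> (Suc n))"
  proof (induction n)
    case 0
    have \<theta>: "\<theta> - of_int (cf_a \<theta> 0) = cf_delta \<theta> 0"
      using cf_rem_unfold[of 0] by (simp add: cf_delta_0)
    let ?a = "cf_a \<theta> (Suc 0)"
    have "of_int (cf_q \<theta> (Suc 0)) * \<theta> - of_int (?a * cf_a \<theta> 0 + 1)
        = of_int ?a * (\<theta> - of_int (cf_a \<theta> 0)) - 1"
      by (simp add: algebra_simps)
    also have "\<dots> = - (1 - of_int ?a * (1 / cf_rem \<theta> (Suc 0)))"
      unfolding \<theta> cf_delta_0 by simp
    also have "\<dots> = - cf_delta \<theta> (Suc 0)"
      unfolding cf_delta_step by (simp add: cf_delta_Suc cf_delta_0)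
    finally have "of_int (cf_q \<theta> (Suc 0)) * \<theta> - of_int (?a * cf_a \<theta> 0 + 1)
        = (-1) ^ Suc 0 * cf_delta \<theta> (Suc 0)"
      by simp
    moreover have "of_int (cf_q \<theta> 0) * \<theta> - of_int (cf_a \<theta> 0) = (-1) ^ 0 * cf_delta \<theta> 0"
      using \<theta> by simp
    ultimately show ?case by (intro conjI) (rule exI, assumption)+
  next
    case (Suc n)
    then obtain p p' where
      p: "of_int (cf_q \<theta> n) * \<theta> - of_int p = (-1) ^ n * cf_delta \<theta> n" and
      p': "of_int (cf_q \<theta> (Suc n)) * \<theta> - of_int p' = (-1) ^ Suc n * cf_delta \<theta> (Suc n)"
      by blast
    let ?a = "cf_a \<theta> (Suc (Suc n))"
    have "of_int (cf_q \<theta> (Suc (Suc n))) * \<theta> - of_int (?a * p' + p)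
        = of_int ?a * (of_int (cf_q \<theta> (Suc n)) * \<theta> - of_int p') + (of_int (cf_q \<theta> n) * \<theta> - of_int p)"
      by (simp add: algebra_simps)
    also have "\<dots> = (-1) ^ n * (cf_delta \<theta> n - of_int ?a * (cf_delta \<theta> n / cf_rem \<theta> (Suc (Suc n))))"
      unfolding p p' cf_delta_Suc by (simp add: algebra_simps)
    also have "\<dots> = (-1) ^ Suc (Suc n) * cf_delta \<theta> (Suc (Suc n))"
      unfolding cf_delta_step cf_delta_Suc by simp
    finally show ?case using p' by blast
  qed
  then show ?thesis ..
qed

lemma cf_rem_mult_Suc:
  "cf_rem \<theta> n * cf_rem \<theta> (Suc n) = of_int (cf_a \<theta> n) * cf_rem \<theta> (Suc n) + 1"
  using cf_rem_Suc_pos[of n] by (subst cf_rem_unfold) (simp add: field_simps)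

lemma cf_delta_Suc_inverse:
  "1 / cf_delta \<theta> (Suc n) = of_int (cf_q \<theta> (Suc n)) * cf_rem \<theta> (Suc (Suc n)) + of_int (cf_q \<theta> n)"
proof (induction n)
  case 0
  show ?case
    using cf_rem_mult_Suc[of 1] by (simp add: cf_delta_Suc cf_delta_0 numeral_2_eq_2 mult.commute)
next
  case (Suc n)
  let ?r = "cf_rem \<theta> (Suc (Suc n))" and ?r' = "cf_rem \<theta> (Suc (Suc (Suc n)))"
  have "1 / cf_delta \<theta> (Suc (Suc n)) = ?r' * (1 / cf_delta \<theta> (Suc n))"
    by (simp add: cf_delta_Suc[of _ "Suc n"])
  also have "\<dots> = ?r' * (of_int (cf_q \<theta> (Suc n)) * ?r + of_int (cf_q \<theta> n))"
    using Suc by simp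
  also have "\<dots> = of_int (cf_q \<theta> (Suc n)) * (?r * ?r') + of_int (cf_q \<theta> n) * ?r'"
    by (simp add: algebra_simps)
  also have "\<dots> = of_int (cf_q \<theta> (Suc (Suc n))) * ?r' + of_int (cf_q \<theta> (Suc n))"
    unfolding cf_rem_mult_Suc by (simp add: algebra_simps)
  finally show ?case .
qed

lemma cf_delta_inverse_bounds:
  "of_int (cf_q \<theta> (Suc n)) < 1 / cf_delta \<theta> n \<and> 1 / cf_delta \<theta> n < of_int (cf_q \<theta> (Suc n)) + of_int (cf_q \<theta> n)"
proof (cases n)
  case 0
  then show ?thesis
    using cf_frac_pos[of 1] cf_frac_less_1[of \<theta> 1] by (simp add: cf_delta_0)
next
  case (Suc m)
  let ?r = "cf_rem \<theta> (Suc n)" and ?a = "cf_a \<theta> (Suc n)" and ?q = "of_int (cf_q \<theta> n) :: real"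
  have "of_int ?a * ?q < ?r * ?q" "?r * ?q < (of_int ?a + 1) * ?q"
    using cf_frac_pos[of "Suc n"] cf_frac_less_1[of \<theta> "Suc n"] cf_q_pos[of n]
    by (intro mult_strict_right_mono; simp)+
  then show ?thesis
    using cf_delta_Suc_inverse[of m] Suc by (simp add: algebra_simps)
qed

lemma cf_delta_bounds:
  "1 / (2 * of_int (cf_q \<theta> (Suc n))) < cf_delta \<theta> n \<and> cf_delta \<theta> n < 1 / of_int (cf_q \<theta> (Suc n))"
proof -
  let ?Q = "of_int (cf_q \<theta> (Suc n)) :: real" and ?Q' = "of_int (cf_q \<theta> n) :: real"
  have Q: "0 < ?Q" "?Q' \<le> ?Q" and \<delta>: "0 < cf_delta \<theta> n"
    using cf_q_pos[of "Suc n"] cf_q_mono[of n "Suc n"] cf_delta_pos[of n]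
    by simp_all
  have "?Q * cf_delta \<theta> n < 1" "1 < (?Q + ?Q') * cf_delta \<theta> n"
    using cf_delta_inverse_bounds[of n] pos_less_divide_eq[OF \<delta>] pos_divide_less_eq[OF \<delta>] by auto
  moreover have "?Q' * cf_delta \<theta> n \<le> ?Q * cf_delta \<theta> n"
    using Q \<delta> by (intro mult_right_mono) auto
  ultimately have "1 < cf_delta \<theta> n * (2 * ?Q)" "cf_delta \<theta> n * ?Q < 1"
    by (simp_all add: algebra_simps)
  then show ?thesis
    using pos_divide_less_eq[of "2 * ?Q" 1] pos_less_divide_eq[of ?Q _ 1] Q by (simp add: mult.commute)
qed

end

definition rot :: "real \<Rightarrow> complex" where
  "rot t = exp (2 * pi * \<i> * of_real t)"

lemma norm_rot [simp]: "norm (rot t) = 1"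
  unfolding rot_def by simp

lemma rot_power: "rot t ^ n = rot (real n * t)"
  unfolding rot_def exp_of_nat_mult[symmetric] by (simp add: algebra_simps)

lemma rot_add_of_int: "rot (of_int p + t) = rot t"
proof -
  have "rot (of_int p + t) = exp (2 * of_int p * pi * \<i>) * rot t"
    unfolding rot_def of_real_add distrib_left exp_add by (simp add: algebra_simps)
  also have "exp (2 * of_int p * pi * \<i>) = 1"
    by (rule exp_integer_2pi) simp
  finally show ?thesis by simp
qed

lemma norm_1_minus_rot: "norm (1 - rot t) = 2 * \<bar>sin (pi * t)\<bar>"
proof -
  have "rot t = exp (\<i> * of_real (2 * pi * t))"
    unfolding rot_def by (simp add: algebra_simps)
  then show ?thesis
    using dist_exp_i_1[of "2 * pi * t"] by (simp add: norm_minus_commute)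
qed

lemma norm_1_minus_rot_le: "norm (1 - rot t) \<le> 2 * pi * \<bar>t\<bar>"
  unfolding norm_1_minus_rot using abs_sin_x_le_abs_x[of "pi * t"] by (simp add: abs_mult)

lemma norm_1_minus_rot_le_2: "norm (1 - rot t) \<le> 2"
  unfolding norm_1_minus_rot using abs_sin_le_one[of "pi * t"] by simp

lemma norm_1_minus_rot_ge_1:
  assumes "1/4 \<le> \<bar>t\<bar>" "\<bar>t\<bar> \<le> 1/2"
  shows "1 \<le> norm (1 - rot t)"
proof -
  have "\<bar>sin (pi * t)\<bar> = \<bar>sin (pi * \<bar>t\<bar>)\<bar>"
    by (cases "0 \<le> t") (auto simp: sin_minus)
  moreover have "0 \<le> sin (pi * \<bar>t\<bar>)"
    using assms by (intro sin_ge_zero) auto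
  moreover have "sin (pi / 6) \<le> sin (pi * \<bar>t\<bar>)"
    using assms by (intro sin_monotone_2pi_le) (auto simp: field_simps)
  ultimately show ?thesis
    unfolding norm_1_minus_rot sin_30 by linarith
qed

lemma summable_exp_minus_real: "summable (\<lambda>j::nat. exp (- real j))"
proof -
  have "exp (- real j) = exp (-1) ^ j" for j
    using exp_of_nat_mult[of j "-1::real"] by simp
  then show ?thesis
    by (simp add: summable_geometric)
qed

lemma eventually_power_cube_dominates:
  fixes \<rho> r a b :: real
  assumes "1 < \<rho>" "0 < r"
  shows "eventually (\<lambda>n::nat. a + b * (real n + 1) * \<rho> ^ n \<le> r * \<rho> * \<rho> ^ (3 * n)) sequentially"
  using assms by real_asymp

lemma power_cube_dominates_le:
  fixes \<rho> r B C K :: real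
  assumes "1 \<le> \<rho>" "0 \<le> r" "0 \<le> B" "3 * n \<le> Q" "m \<le> n + 1"
    and "K + C + 2 * B * \<rho> * (real n + 1) * \<rho> ^ n \<le> r * \<rho> * \<rho> ^ (3 * n)"
  shows "K \<le> r * \<rho> ^ (Q + 1) - (real m * (2 * B * \<rho> ^ (n + 1)) + C)"
proof -
  have "\<rho> ^ (3 * n) \<le> \<rho> ^ Q"
    using assms by (intro power_increasing) auto
  then have "(r * \<rho>) * \<rho> ^ (3 * n) \<le> (r * \<rho>) * \<rho> ^ Q"
    using assms by (intro mult_left_mono) auto
  moreover have "real m * (2 * B * \<rho> ^ (n + 1)) \<le> (real n + 1) * (2 * B * \<rho> ^ (n + 1))"
    using assms by (intro mult_right_mono) auto
  ultimately show ?thesis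
    using assms(6) by (simp add: algebra_simps)
qed

lemma Suc_mult_power_le:
  fixes t :: real
  assumes "0 \<le> t" "t < 1"
  shows "real (Suc n) * t ^ n \<le> 1 / (1 - t)"
proof -
  have "real (card {..<Suc n}) * t ^ n \<le> (\<Sum>i<Suc n. t ^ i)"
    using assms by (intro sum_bounded_below power_decreasing) auto
  also have "\<dots> = (1 - t ^ Suc n) / (1 - t)"
    using assms by (subst sum_gp_strict) auto
  also have "\<dots> \<le> 1 / (1 - t)"
    using assms by (intro divide_right_mono) auto
  finally show ?thesis by simp
qed

lemma norm_power_diff_le:
  fixes z z' :: "'a::real_normed_field"
  assumes "norm z \<le> s" "norm z' \<le> s"
  shows "norm (z' ^ n - z ^ n) \<le> real n * s ^ (n - 1) * norm (z' - z)"
proof -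
  have "0 \<le> s"
    using assms(1) norm_ge_zero order_trans by blast
  have "norm (z ^ (n - Suc i) * z' ^ i) \<le> s ^ (n - 1)" if "i < n" for i
  proof -
    have "norm (z ^ (n - Suc i) * z' ^ i) \<le> s ^ (n - Suc i) * s ^ i"
      unfolding norm_mult norm_power using assms \<open>0 \<le> s\<close> by (intro mult_mono power_mono) auto
    also have "\<dots> = s ^ (n - 1)"
      using that by (simp add: power_add[symmetric])
    finally show ?thesis .
  qed
  then have "norm (\<Sum>i<n. z ^ (n - Suc i) * z' ^ i) \<le> (\<Sum>i<n. s ^ (n - 1))"
    by (intro order_trans[OF norm_sum] sum_mono) auto
  then show ?thesis
    unfolding power_diff_sumr2 norm_mult by (simp add: mult_left_mono mult.commute)
qed

lemma norm_suminf_ge_term: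
  fixes f :: "nat \<Rightarrow> 'a::banach"
  assumes g: "summable g" "\<And>j. 0 \<le> g j" and f: "\<And>j. j \<noteq> m \<Longrightarrow> norm (f j) \<le> g j"
  shows "norm (f m) - suminf g \<le> norm (suminf f)"
proof -
  define f' where "f' j = (if j = m then 0 else f j)" for j
  have norm_f': "norm (f' j) \<le> g j" for j
    using f g(2) by (simp add: f'_def)
  then have "summable (\<lambda>j. norm (f' j))"
    by (intro summable_comparison_test'[OF g(1)]) auto
  then have "norm (suminf f') \<le> suminf g"
    using summable_norm suminf_le[OF norm_f' _ g(1)] order_trans by blast
  moreover have "f sums (f m + suminf f')"
  proof -
    have "(\<lambda>j. (if j = m then f j else 0) + f' j) sums (f m + suminf f')"
      using sums_single summable_norm_cancel[OF \<open>summable (\<lambda>j. norm (f' j))\<close>]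
      by (intro sums_add) (auto simp: summable_sums)
    moreover have "(\<lambda>j. (if j = m then f j else 0) + f' j) = f"
      by (auto simp: f'_def)
    ultimately show ?thesis by simp
  qed
  then have "norm (f m) \<le> norm (suminf f) + norm (suminf f')"
    using norm_triangle_ineq4[of "suminf f" "suminf f'"] by (simp add: sums_iff)
  ultimately show ?thesis by linarith
qed

lemma exists_quarter_turn:
  fixes \<delta> :: real
  assumes "0 < \<delta>" "\<delta> \<le> 1/4"
  obtains N :: nat where "1/4 \<le> real N * \<delta>" "real N * \<delta> \<le> 1/2" "real N \<le> 1 / (2 * \<delta>)"
proof
  let ?N = "nat \<lceil>1 / (4 * \<delta>)\<rceil>"
  have "real ?N = of_int \<lceil>1 / (4 * \<delta>)\<rceil>"
    using assms by simp
  then have N: "1 / (4 * \<delta>) \<le> real ?N" "real ?N < 1 / (4 * \<delta>) + 1"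
    using ceiling_correct[of "1 / (4 * \<delta>)"] by linarith+
  have "1 / (4 * \<delta>) * \<delta> \<le> real ?N * \<delta>"
    using N(1) assms by (intro mult_right_mono) auto
  then show "1/4 \<le> real ?N * \<delta>"
    using assms by simp
  have "real ?N * \<delta> < (1 / (4 * \<delta>) + 1) * \<delta>"
    using N(2) assms by (intro mult_strict_right_mono) auto
  also have "(1 / (4 * \<delta>) + 1) * \<delta> = 1/4 + \<delta>"
    using assms by (simp add: field_simps)
  finally show "real ?N * \<delta> \<le> 1/2"
    using assms by linarith
  have "1 \<le> 1 / (4 * \<delta>)"
    using assms by (simp add: field_simps)
  moreover have "1 / (4 * \<delta>) + 1 / (4 * \<delta>) = 1 / (2 * \<delta>)"
    by (simp add: field_simps)
  ultimately show "real ?N \<le> 1 / (2 * \<delta>)"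
    using N(2) by linarith
qed

section \<open>Fatou sets and components\<close>

lemma fatou_set_bounded_orbit_nearby:
  fixes F :: "'a::metric_space \<Rightarrow> 'a"
  assumes "x \<in> fatou_set F"
  obtains d where "0 < d"
    "\<And>y y'. y \<in> ball x d \<Longrightarrow> y' \<in> ball x d \<Longrightarrow> bounded (range (\<lambda>N. (F ^^ N) y))
      \<Longrightarrow> bounded (range (\<lambda>N. (F ^^ N) y'))"
proof -
  obtain U where U: "open U" "x \<in> U" and equicont:
    "\<forall>e>0. \<exists>d>0. \<forall>y\<in>U. dist y x < d \<longrightarrow> (\<forall>N. dist ((F ^^ N) y) ((F ^^ N) x) < e)"
    using assms unfolding fatou_set_def by blast
  obtain d1 where d1: "0 < d1" "\<And>y N. y \<in> U \<Longrightarrow> dist y x < d1 \<Longrightarrow> dist ((F ^^ N) y) ((F ^^ N) x) < 1"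
    using equicont zero_less_one by blast
  obtain d2 where d2: "0 < d2" "ball x d2 \<subseteq> U"
    using U open_contains_ball by blast
  show ?thesis
  proof
    show "0 < min d1 d2" using d1 d2 by simp
    fix y y' assume y: "y \<in> ball x (min d1 d2)" and y': "y' \<in> ball x (min d1 d2)"
      and "bounded (range (\<lambda>N. (F ^^ N) y))"
    then obtain e where e: "\<And>N. dist y ((F ^^ N) y) \<le> e"
      unfolding bounded_any_center[where a = y] by blast
    have "y \<in> U" "y' \<in> U"
      using y y' d2 by auto
    have close: "dist ((F ^^ N) y) ((F ^^ N) y') < 2" for N
      using d1(2)[OF \<open>y \<in> U\<close>, of N] d1(2)[OF \<open>y' \<in> U\<close>, of N] y y'
        dist_triangle3[of "(F ^^ N) y" "(F ^^ N) y'" "(F ^^ N) x"]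
      by (auto simp: dist_commute)
    then have "dist y ((F ^^ N) y') \<le> e + 2" for N
      using e[of N] close[of N] dist_triangle[of y "(F ^^ N) y'" "(F ^^ N) y"] by linarith
    then show "bounded (range (\<lambda>N. (F ^^ N) y'))"
      unfolding bounded_any_center[where a = y] by blast
  qed
qed

lemma in_components_if_frontier_disjoint:
  assumes "connected S" "S \<noteq> {}" "S \<subseteq> T" "frontier S \<inter> T = {}"
  shows "S \<in> components T"
  unfolding in_components_maximal
proof (intro conjI allI impI assms)
  fix D assume D: "D \<noteq> {} \<and> S \<subseteq> D \<and> D \<subseteq> T \<and> connected D"
  show "D = S"
  proof (rule ccontr)
    assume "D \<noteq> S"
    then have "D \<inter> frontier S \<noteq> {}"
      using D assms(2) by (intro connected_Int_frontier) auto
    then show False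
      using D assms(4) by blast
  qed
qed

section \<open>Rapidly approximable rotation numbers\<close>

locale rapid_convergents =
  fixes \<theta> :: real and k :: "nat \<Rightarrow> nat"
  assumes irrational: "\<theta> \<notin> \<rat>"
    and growth: "filterlim (\<lambda>n. ln (real_of_int (cf_q \<theta> (Suc n))) / real_of_int (cf_q \<theta> n))
                   at_top sequentially"
    and strict_mono_k: "strict_mono k"
begin

definition qs :: "nat \<Rightarrow> nat" where
  "qs j = nat (cf_q \<theta> (k j))"

text \<open>\<open>err j = q'_j \<theta> - p\<close> for the integer \<open>p\<close> nearest to \<open>q'_j \<theta>\<close>.\<close>
definition err :: "nat \<Rightarrow> real" where
  "err j = (-1) ^ k j * cf_delta \<theta> (k j)"

lemma of_nat_qs: "real (qs j) = of_int (cf_q \<theta> (k j))"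
  unfolding qs_def using cf_q_pos[OF irrational, of "k j"] by simp

lemma qs_ge_index: "j \<le> qs j"
  using seq_suble[OF strict_mono_k, of j] cf_q_ge_index[OF irrational, of "k j"]
  unfolding qs_def by linarith

lemma qs_mono: "i \<le> j \<Longrightarrow> qs i \<le> qs j"
  unfolding qs_def using cf_q_mono[OF irrational] strict_mono_mono[OF strict_mono_k]
  by (simp add: monoD nat_mono)

lemma next_cf_q_le_qs: "i < j \<Longrightarrow> of_int (cf_q \<theta> (Suc (k i))) \<le> real (qs j)"
  unfolding of_nat_qs using cf_q_mono[OF irrational] strict_mono_k
  by (simp add: strict_mono_less Suc_leI)

lemma rot_power_qs: "rot \<theta> ^ (N * qs j) = rot (real N * err j)"
proof -
  obtain p where p: "of_int (cf_q \<theta> (k j)) * \<theta> - of_int p = err j"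
    using cf_q_approx[OF irrational, of "k j"] unfolding err_def by blast
  have "real (N * qs j) * \<theta> = of_int (int N * p) + real N * err j"
    unfolding of_nat_mult of_nat_qs p[symmetric] by (simp add: algebra_simps)
  then show ?thesis
    unfolding rot_power by (simp only: rot_add_of_int)
qed

lemma abs_err_bounds:
  "1 / (2 * of_int (cf_q \<theta> (Suc (k j)))) < \<bar>err j\<bar> \<and> \<bar>err j\<bar> < 1 / of_int (cf_q \<theta> (Suc (k j)))"
  using cf_delta_bounds[OF irrational, of "k j"] cf_delta_pos[OF irrational, of "k j"]
  unfolding err_def by (simp add: abs_mult)

lemma eventually_exp_le_cf_q_Suc:
  fixes C :: real
  shows "eventually (\<lambda>n. exp (C * of_int (cf_q \<theta> n)) \<le> of_int (cf_q \<theta> (Suc n))) sequentially"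
  using growth[unfolded filterlim_at_top, rule_format, of C]
proof (rule eventually_mono)
  fix n assume "C \<le> ln (real_of_int (cf_q \<theta> (Suc n))) / real_of_int (cf_q \<theta> n)"
  moreover have "0 < real_of_int (cf_q \<theta> n)" "0 < real_of_int (cf_q \<theta> (Suc n))"
    using cf_q_pos[OF irrational, of n] cf_q_pos[OF irrational, of "Suc n"] by simp_all
  ultimately have "C * of_int (cf_q \<theta> n) \<le> ln (real_of_int (cf_q \<theta> (Suc n)))"
    by (simp add: pos_le_divide_eq)
  then show "exp (C * of_int (cf_q \<theta> n)) \<le> of_int (cf_q \<theta> (Suc n))"
    using \<open>0 < real_of_int (cf_q \<theta> (Suc n))\<close> by (metis exp_le_cancel_iff exp_ln)
qed

lemma eventually_exp_le_next_cf_q: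
  fixes C :: real
  shows "eventually (\<lambda>j. exp (C * real (qs j)) \<le> of_int (cf_q \<theta> (Suc (k j)))) sequentially"
  unfolding of_nat_qs
  by (rule eventually_compose_filterlim[OF eventually_exp_le_cf_q_Suc filterlim_subseq[OF strict_mono_k]])

lemma eventually_qs_Suc_ge: "eventually (\<lambda>j. 3 * qs j \<le> qs (Suc j)) sequentially"
  using eventually_exp_le_next_cf_q[of 3]
proof (rule eventually_mono)
  fix j assume "exp (3 * real (qs j)) \<le> of_int (cf_q \<theta> (Suc (k j)))"
  moreover have "1 + 3 * real (qs j) \<le> exp (3 * real (qs j))"
    by (rule exp_ge_add_one_self)
  ultimately show "3 * qs j \<le> qs (Suc j)"
    using next_cf_q_le_qs[of j "Suc j"] by linarith
qed

text \<open>Here the growth of the denominators beats the factor \<open>\<rho>^q'_j\<close>.\<close>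
lemma eventually_err_small:
  assumes "1 \<le> \<rho>"
  shows "eventually (\<lambda>j. \<rho> ^ qs j * real (qs j) * \<bar>err j\<bar> \<le> exp (- real j)) sequentially"
  using eventually_exp_le_next_cf_q[of "ln \<rho> + 2"]
proof (rule eventually_mono)
  fix j
  define Q where "Q = real (qs j)"
  assume "exp ((ln \<rho> + 2) * real (qs j)) \<le> of_int (cf_q \<theta> (Suc (k j)))"
  then have "1 / of_int (cf_q \<theta> (Suc (k j))) \<le> 1 / exp ((ln \<rho> + 2) * Q)"
    unfolding Q_def by (intro frac_le) auto
  then have err: "\<bar>err j\<bar> \<le> exp (- ((ln \<rho> + 2) * Q))"
    using abs_err_bounds[of j] by (simp add: exp_minus inverse_eq_divide)
  have pow: "\<rho> ^ qs j = exp (Q * ln \<rho>)"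
    using assms unfolding Q_def by (simp add: exp_of_nat_mult)
  have "\<rho> ^ qs j * Q * \<bar>err j\<bar> \<le> exp (Q * ln \<rho>) * Q * exp (- ((ln \<rho> + 2) * Q))"
    unfolding pow using err unfolding Q_def by (intro mult_left_mono) auto
  also have "\<dots> = Q * exp (- Q) * exp (- Q)"
    by (simp add: exp_add[symmetric] algebra_simps)
  also have "\<dots> \<le> exp (- Q)"
  proof -
    have "Q \<le> exp Q"
      using exp_ge_add_one_self[of Q] by linarith
    then have "Q * exp (- Q) \<le> 1"
      by (simp add: exp_minus field_simps)
    then show ?thesis
      using mult_right_mono[of "Q * exp (- Q)" 1 "exp (- Q)"] by simp
  qed
  also have "\<dots> \<le> exp (- real j)"
    using qs_ge_index[of j] unfolding Q_def by simp
  finally show "\<rho> ^ qs j * real (qs j) * \<bar>err j\<bar> \<le> exp (- real j)"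
    unfolding Q_def .
qed

lemma exists_quarter_turn_qs:
  assumes "3 \<le> m"
  obtains N :: nat where "1/4 \<le> real N * \<bar>err m\<bar>" "real N * \<bar>err m\<bar> \<le> 1/2"
    "\<And>j. m < j \<Longrightarrow> real N \<le> real (qs j)"
proof -
  let ?Q = "of_int (cf_q \<theta> (Suc (k m))) :: real"
  have "real (Suc m) \<le> ?Q"
    using seq_suble[OF strict_mono_k, of m] cf_q_ge_index[OF irrational, of "Suc (k m)"] by linarith
  then have "4 \<le> ?Q"
    using assms by linarith
  have bounds: "1 / (2 * ?Q) < \<bar>err m\<bar>" "\<bar>err m\<bar> < 1 / ?Q"
    using abs_err_bounds[of m] by auto
  then have "1 < \<bar>err m\<bar> * (2 * ?Q)" "\<bar>err m\<bar> * ?Q < 1"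
    using \<open>4 \<le> ?Q\<close> by (simp_all add: pos_divide_less_eq pos_less_divide_eq)
  moreover have "0 < \<bar>err m\<bar>"
    using cf_delta_pos[OF irrational, of "k m"] unfolding err_def by (simp add: abs_mult)
  moreover have "\<bar>err m\<bar> * 4 \<le> \<bar>err m\<bar> * ?Q"
    using \<open>4 \<le> ?Q\<close> by (intro mult_left_mono) auto
  ultimately have err: "0 < \<bar>err m\<bar>" "\<bar>err m\<bar> \<le> 1/4" "1 < 2 * ?Q * \<bar>err m\<bar>"
    by (linarith, linarith, simp add: ac_simps)
  obtain N :: nat where N: "1/4 \<le> real N * \<bar>err m\<bar>" "real N * \<bar>err m\<bar> \<le> 1/2" "real N \<le> 1 / (2 * \<bar>err m\<bar>)"
    using exists_quarter_turn[OF err(1,2)] by blast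
  have "1 / (2 * \<bar>err m\<bar>) < ?Q"
    using err by (simp add: field_simps)
  then have "real N \<le> real (qs j)" if "m < j" for j
    using N(3) next_cf_q_le_qs[OF that] by linarith
  with N(1,2) show ?thesis
    using that by blast
qed

end

locale bounded_coefficients = rapid_convergents +
  fixes u :: "nat \<Rightarrow> complex" and B :: real
  assumes norm_u_le: "\<And>m. norm (u m) \<le> B"
begin

lemma B_nonneg: "0 \<le> B"
  using norm_u_le[of 0] norm_ge_zero order_trans by blast

text \<open>The iterates are \<open>(\<lambda>^N (w + drift N z), \<lambda>^N z)\<close>, see \<open>A_map_iterate\<close>.\<close>
definition drift_term :: "nat \<Rightarrow> complex \<Rightarrow> nat \<Rightarrow> complex" where
  "drift_term N z j = u (qs j) * z ^ (qs j + 1) * (1 - rot \<theta> ^ (N * qs j))"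

definition drift :: "nat \<Rightarrow> complex \<Rightarrow> complex" where
  "drift N z = suminf (drift_term N z)"

lemma norm_drift_term:
  "norm (drift_term N z j) = norm (u (qs j)) * norm z ^ (qs j + 1) * norm (1 - rot (real N * err j))"
  unfolding drift_term_def rot_power_qs by (simp add: norm_mult norm_power)

lemma norm_drift_term_le: "norm (drift_term N z j) \<le> 2 * B * norm z ^ (qs j + 1)"
proof -
  have "norm (drift_term N z j) \<le> B * norm z ^ (qs j + 1) * 2"
    unfolding norm_drift_term using norm_u_le norm_1_minus_rot_le_2 B_nonneg
    by (intro mult_mono) auto
  then show ?thesis
    by (simp add: ac_simps)
qed

lemma norm_drift_term_le_tail:
  assumes "norm z \<le> \<rho>" "real N \<le> real (qs j)" "\<rho> ^ qs j * real (qs j) * \<bar>err j\<bar> \<le> e"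
  shows "norm (drift_term N z j) \<le> 2 * pi * B * \<rho> * e"
proof -
  have "0 \<le> \<rho>"
    using assms(1) norm_ge_zero order_trans by blast
  have "norm (1 - rot (real N * err j)) \<le> 2 * pi * (real N * \<bar>err j\<bar>)"
    using norm_1_minus_rot_le[of "real N * err j"] by (simp add: abs_mult)
  also have "\<dots> \<le> 2 * pi * (real (qs j) * \<bar>err j\<bar>)"
    using assms(2) by (intro mult_left_mono mult_right_mono) auto
  finally have "norm (drift_term N z j) \<le> B * \<rho> ^ (qs j + 1) * (2 * pi * (real (qs j) * \<bar>err j\<bar>))"
    unfolding norm_drift_term using norm_u_le B_nonneg assms(1) \<open>0 \<le> \<rho>\<close>
    by (intro mult_mono power_mono) auto
  also have "\<dots> = 2 * pi * B * \<rho> * (\<rho> ^ qs j * real (qs j) * \<bar>err j\<bar>)"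
    by (simp add: algebra_simps)
  also have "\<dots> \<le> 2 * pi * B * \<rho> * e"
    using assms B_nonneg \<open>0 \<le> \<rho>\<close> by (intro mult_left_mono) auto
  finally show ?thesis .
qed

lemma summable_norm_drift_term: "summable (\<lambda>j. norm (drift_term N z j))"
proof (rule summable_comparison_test_ev)
  define \<rho> where "\<rho> = max 1 (norm z)"
  show "summable (\<lambda>j. 2 * pi * B * \<rho> * exp (- real j))"
    by (intro summable_mult summable_exp_minus_real)
  have "1 \<le> \<rho>"
    unfolding \<rho>_def by simp
  show "eventually (\<lambda>j. norm (norm (drift_term N z j)) \<le> 2 * pi * B * \<rho> * exp (- real j)) sequentially"
    using eventually_ge_at_top[of N] eventually_err_small[OF \<open>1 \<le> \<rho>\<close>]
  proof (eventually_elim)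
    case (elim j)
    then show ?case
      using norm_drift_term_le_tail[of z \<rho> N j "exp (- real j)"] qs_ge_index[of j]
      unfolding \<rho>_def by simp
  qed
qed

lemma summable_drift_term: "summable (drift_term N z)"
  using summable_norm_cancel[OF summable_norm_drift_term] .

lemma drift_0_right [simp]: "drift N 0 = 0"
  unfolding drift_def drift_term_def by simp

lemma drift_0_left [simp]: "drift 0 z = 0"
  unfolding drift_def drift_term_def by simp

lemma phi_eq_drift: "phi \<theta> qs u z = rot \<theta> * drift 1 z"
proof (cases "z = 0")
  case False
  have "exp (2 * pi * \<i> * of_nat (qs j) * \<theta>) = rot \<theta> ^ qs j" for j
    unfolding rot_def exp_of_nat_mult[symmetric] by (simp add: algebra_simps)
  moreover have "u (qs j) * (1 - rot \<theta> ^ qs j) * z ^ qs j = drift_term 1 z j / z" for j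
    using False unfolding drift_term_def by (simp add: field_simps)
  ultimately have "phi \<theta> qs u z = z * rot \<theta> * (\<Sum>j. drift_term 1 z j / z)"
    unfolding phi_def rot_def by simp
  also have "\<dots> = rot \<theta> * drift 1 z"
    unfolding suminf_divide[OF summable_drift_term] drift_def using False by simp
  finally show ?thesis .
qed (simp add: phi_def)

lemma drift_1_rotate: "drift 1 (rot \<theta> ^ N * z) = rot \<theta> ^ N * (drift (Suc N) z - drift N z)"
proof -
  have "drift_term 1 (rot \<theta> ^ N * z) = (\<lambda>j. rot \<theta> ^ N * (drift_term (Suc N) z j - drift_term N z j))"
    by (simp add: fun_eq_iff drift_term_def algebra_simps power_add power_mult_distrib power_mult)
  then show ?thesis
    unfolding drift_def
    using suminf_mult[OF summable_diff[OF summable_drift_term summable_drift_term]]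
      suminf_diff[OF summable_drift_term summable_drift_term]
    by simp
qed

lemma A_map_iterate: "(A_map \<theta> qs u ^^ N) (w, z) = (rot \<theta> ^ N * (w + drift N z), rot \<theta> ^ N * z)"
proof (induction N)
  case (Suc N)
  have A: "A_map \<theta> qs u (w, z) = (rot \<theta> * w + rot \<theta> * drift 1 z, rot \<theta> * z)" for w z
    unfolding A_map_def rot_def[symmetric] phi_eq_drift by simp
  have "(A_map \<theta> qs u ^^ Suc N) (w, z) = A_map \<theta> qs u (rot \<theta> ^ N * (w + drift N z), rot \<theta> ^ N * z)"
    using Suc by simp
  also have "\<dots> = (rot \<theta> ^ Suc N * (w + drift (Suc N) z), rot \<theta> ^ Suc N * z)"
    unfolding A drift_1_rotate by (simp add: algebra_simps)
  finally show ?case .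
qed simp

section \<open>The cylinder over the unit disc\<close>

lemma norm_drift_le:
  assumes "norm z < 1"
  shows "norm (drift N z) \<le> 2 * B / (1 - norm z)"
proof -
  have bound: "norm (drift_term N z j) \<le> 2 * B * norm z ^ j" for j
  proof -
    have "norm z ^ (qs j + 1) \<le> norm z ^ j"
      using qs_ge_index[of j] assms by (intro power_decreasing) auto
    then have "2 * B * norm z ^ (qs j + 1) \<le> 2 * B * norm z ^ j"
      using B_nonneg by (intro mult_left_mono) auto
    then show ?thesis
      using norm_drift_term_le[of N z j] by linarith
  qed
  have summable: "summable (\<lambda>j. 2 * B * norm z ^ j)"
    using assms by (intro summable_mult summable_geometric) auto
  have "norm (drift N z) \<le> (\<Sum>j. norm (drift_term N z j))"
    unfolding drift_def by (rule summable_norm[OF summable_norm_drift_term])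
  also have "\<dots> \<le> (\<Sum>j. 2 * B * norm z ^ j)"
    by (rule suminf_le[OF bound summable_norm_drift_term summable])
  also have "\<dots> = 2 * B / (1 - norm z)"
    using suminf_mult[OF summable_geometric, of "norm z" "2 * B"] suminf_geometric[of "norm z"] assms
    by simp
  finally show ?thesis .
qed

text \<open>The factor \<open>(q + 1) s^q\<close> from differentiating \<open>z^(q+1)\<close> is at most \<open>t^q / (1 - t)\<close>
  for \<open>s = t\<^sup>2\<close>, which leaves the summable factor \<open>t^q \<le> t^j\<close>.\<close>
lemma norm_drift_term_diff_le:
  assumes t: "0 \<le> t" "t < 1" and z: "norm z \<le> t * t" "norm z' \<le> t * t"
  shows "norm (drift_term N z' j - drift_term N z j) \<le> 2 * B / (1 - t) * norm (z' - z) * t ^ j"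
proof -
  let ?q = "qs j"
  have "norm (drift_term N z' j - drift_term N z j)
      = norm (u ?q) * norm (z' ^ (?q + 1) - z ^ (?q + 1)) * norm (1 - rot (real N * err j))"
    unfolding drift_term_def rot_power_qs[symmetric] norm_mult[symmetric] by (simp add: algebra_simps)
  also have "\<dots> \<le> B * (real (Suc ?q) * (t * t) ^ ?q * norm (z' - z)) * 2"
    using norm_u_le norm_1_minus_rot_le_2 B_nonneg t norm_power_diff_le[OF z, of "?q + 1"]
    by (intro mult_mono) auto
  also have "real (Suc ?q) * (t * t) ^ ?q = real (Suc ?q) * t ^ ?q * t ^ ?q"
    by (simp add: power_mult_distrib)
  also have "\<dots> \<le> 1 / (1 - t) * t ^ j"
    using Suc_mult_power_le[OF t, of ?q] qs_ge_index[of j] t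
    by (intro mult_mono power_decreasing) auto
  finally show ?thesis
    using B_nonneg by (simp add: mult_left_mono mult_right_mono algebra_simps)
qed

lemma norm_drift_diff_le:
  assumes "s < 1" "norm z \<le> s" "norm z' \<le> s"
  shows "norm (drift N z' - drift N z) \<le> 2 * B / (1 - sqrt s) ^ 2 * norm (z' - z)"
proof -
  define t where "t = sqrt s"
  have "0 \<le> s"
    using assms(2) norm_ge_zero order_trans by blast
  then have t: "0 \<le> t" "t < 1" "t * t = s"
    using assms(1) unfolding t_def by auto
  note bound = norm_drift_term_diff_le[OF t(1,2), of z z' N, unfolded t(3), OF assms(2,3)]
  have summable: "summable (\<lambda>j. 2 * B / (1 - t) * norm (z' - z) * t ^ j)"
    using t by (intro summable_mult summable_geometric) auto
  have summable_norm_diff: "summable (\<lambda>j. norm (drift_term N z' j - drift_term N z j))"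
    by (rule summable_comparison_test'[OF summable]) (use bound in simp)
  have "norm (drift N z' - drift N z) = norm (\<Sum>j. drift_term N z' j - drift_term N z j)"
    unfolding drift_def using suminf_diff[OF summable_drift_term summable_drift_term] by simp
  also have "\<dots> \<le> (\<Sum>j. norm (drift_term N z' j - drift_term N z j))"
    by (rule summable_norm[OF summable_norm_diff])
  also have "\<dots> \<le> (\<Sum>j. 2 * B / (1 - t) * norm (z' - z) * t ^ j)"
    by (rule suminf_le[OF bound summable_norm_diff summable])
  also have "\<dots> = 2 * B / (1 - t) * norm (z' - z) * (1 / (1 - t))"
    by (intro sums_unique[symmetric] sums_mult geometric_sums) (use t in simp)
  also have "\<dots> = 2 * B / (1 - sqrt s) ^ 2 * norm (z' - z)"
    unfolding t_def by (simp add: power2_eq_square)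
  finally show ?thesis .
qed

lemma bounded_orbit_in_disc:
  assumes "norm z < 1"
  shows "bounded (range (\<lambda>N. (A_map \<theta> qs u ^^ N) (w, z)))"
  unfolding bounded_iff
proof (intro exI ballI)
  fix y assume "y \<in> range (\<lambda>N. (A_map \<theta> qs u ^^ N) (w, z))"
  then obtain N where y: "y = (rot \<theta> ^ N * (w + drift N z), rot \<theta> ^ N * z)"
    unfolding A_map_iterate by blast
  have "norm y \<le> norm (w + drift N z) + norm z"
    unfolding y using norm_Pair_le[of "rot \<theta> ^ N * (w + drift N z)" "rot \<theta> ^ N * z"]
    by (simp add: norm_mult norm_power)
  then show "norm y \<le> norm w + 2 * B / (1 - norm z) + 1"
    using norm_triangle_ineq[of w "drift N z"] norm_drift_le[OF assms, of N] assms by linarith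
qed

lemma dist_iterate_le:
  assumes "s < 1" "norm z \<le> s" "norm z' \<le> s"
  shows "dist ((A_map \<theta> qs u ^^ N) (w', z')) ((A_map \<theta> qs u ^^ N) (w, z))
    \<le> (2 + 2 * B / (1 - sqrt s) ^ 2) * dist (w', z') (w, z)"
proof -
  let ?K = "2 * B / (1 - sqrt s) ^ 2"
  have dist_rot: "dist (rot \<theta> ^ N * a) (rot \<theta> ^ N * b) = dist a b" for a b
    unfolding dist_norm right_diff_distrib[symmetric] by (simp add: norm_mult norm_power)
  have "dist ((A_map \<theta> qs u ^^ N) (w', z')) ((A_map \<theta> qs u ^^ N) (w, z))
      \<le> dist (w' + drift N z') (w + drift N z) + dist z' z"
    unfolding A_map_iterate dist_Pair_Pair dist_rot
    using sqrt_sum_squares_le_sum_abs[of "dist (w' + drift N z') (w + drift N z)" "dist z' z"] by simp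
  also have "\<dots> \<le> dist w' w + ?K * dist z' z + dist z' z"
    using norm_triangle_ineq[of "w' - w" "drift N z' - drift N z"] norm_drift_diff_le[OF assms, of N]
    by (simp add: dist_norm algebra_simps)
  also have "\<dots> \<le> (2 + ?K) * dist (w', z') (w, z)"
    using dist_fst_le[of "(w', z')" "(w, z)"] dist_snd_le[of "(w', z')" "(w, z)"]
      mult_left_mono[of "dist z' z" "dist (w', z') (w, z)" ?K] B_nonneg
    by (simp add: algebra_simps)
  finally show ?thesis .
qed

lemma disc_subset_fatou_set: "UNIV \<times> ball 0 1 \<subseteq> fatou_set (A_map \<theta> qs u)"
proof -
  let ?S = "UNIV \<times> ball (0::complex) 1" and ?F = "A_map \<theta> qs u"
  have "\<exists>d>0. \<forall>y'\<in>?S. dist y' (w, z) < d \<longrightarrow> (\<forall>N. dist ((?F ^^ N) y') ((?F ^^ N) (w, z)) < e)"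
    if "norm z < 1" "0 < e" for w z e
  proof -
    define s where "s = (1 + norm z) / 2"
    define K where "K = 2 + 2 * B / (1 - sqrt s) ^ 2"
    have s: "s < 1" "norm z \<le> s"
      using that unfolding s_def by auto
    have "0 \<le> 2 * B / (1 - sqrt s) ^ 2"
      using B_nonneg by (intro divide_nonneg_nonneg) auto
    then have "0 < K"
      unfolding K_def by linarith
    define d where "d = min ((1 - norm z) / 2) (e / K)"
    have "0 < d"
      using that \<open>0 < K\<close> unfolding d_def by auto
    moreover have "dist ((?F ^^ N) (w', z')) ((?F ^^ N) (w, z)) < e"
      if "dist (w', z') (w, z) < d" for w' z' N
    proof -
      have "norm z' \<le> norm z + dist z' z"
        by (metis dist_norm norm_triangle_sub add.commute)
      also have "\<dots> \<le> s"
        using dist_snd_le[of "(w', z')" "(w, z)"] that unfolding d_def s_def by simp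
      finally have "dist ((?F ^^ N) (w', z')) ((?F ^^ N) (w, z)) \<le> K * dist (w', z') (w, z)"
        unfolding K_def using dist_iterate_le[OF s] by blast
      also have "\<dots> < K * (e / K)"
        using that \<open>0 < K\<close> unfolding d_def by (intro mult_strict_left_mono) auto
      finally show ?thesis
        using \<open>0 < K\<close> by simp
    qed
    ultimately show ?thesis
      by auto
  qed
  then show ?thesis
    unfolding fatou_set_def by (intro subsetI CollectI exI[of _ ?S]) (auto intro: open_Times)
qed

section \<open>Escape outside the closed disc\<close>

lemma norm_drift_term_le_head:
  assumes "1 \<le> norm z" "qs j \<le> Q"
  shows "norm (drift_term N z j) \<le> 2 * B * norm z ^ (Q + 1)"
proof -
  have "norm z ^ (qs j + 1) \<le> norm z ^ (Q + 1)"
    using assms by (intro power_increasing) auto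
  then have "2 * B * norm z ^ (qs j + 1) \<le> 2 * B * norm z ^ (Q + 1)"
    using B_nonneg by (intro mult_left_mono) auto
  then show ?thesis
    using norm_drift_term_le[of N z j] by linarith
qed

lemma norm_drift_term_ge:
  assumes "1/4 \<le> real N * \<bar>err j\<bar>" "real N * \<bar>err j\<bar> \<le> 1/2" "r \<le> norm (u (qs j))"
  shows "r * norm z ^ (qs j + 1) \<le> norm (drift_term N z j)"
proof -
  have "1 \<le> norm (1 - rot (real N * err j))"
    using assms by (intro norm_1_minus_rot_ge_1) (auto simp: abs_mult)
  then have "r * norm z ^ (qs j + 1) * 1 \<le> norm (u (qs j)) * norm z ^ (qs j + 1) * norm (1 - rot (real N * err j))"
    using assms(3) by (intro mult_mono) auto
  then show ?thesis
    unfolding norm_drift_term by simp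
qed

lemma norm_drift_ge:
  assumes z: "1 \<le> norm z" and r: "r \<le> norm (u (qs (Suc M)))"
    and turn: "1/4 \<le> real N * \<bar>err (Suc M)\<bar>" "real N * \<bar>err (Suc M)\<bar> \<le> 1/2"
    and tail: "\<And>j. Suc M < j \<Longrightarrow> real N \<le> real (qs j)"
      "\<And>j. Suc M < j \<Longrightarrow> norm z ^ qs j * real (qs j) * \<bar>err j\<bar> \<le> exp (- real j)"
  shows "r * norm z ^ (qs (Suc M) + 1)
    - (real (Suc M) * (2 * B * norm z ^ (qs M + 1)) + 2 * pi * B * norm z * (\<Sum>j. exp (- real j)))
    \<le> norm (drift N z)"
proof -
  define g where
    "g j = (if j < Suc M then 2 * B * norm z ^ (qs M + 1) else 0) + 2 * pi * B * norm z * exp (- real j)" for j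
  have summable_head: "summable (\<lambda>j. if j < Suc M then 2 * B * norm z ^ (qs M + 1) else 0)"
    by (rule summable_finite[of "{..<Suc M}"]) auto
  have summable_tail: "summable (\<lambda>j. 2 * pi * B * norm z * exp (- real j))"
    by (intro summable_mult summable_exp_minus_real)
  have summable_g: "summable g"
    unfolding g_def by (rule summable_add[OF summable_head summable_tail])
  have sum_g: "suminf g = real (Suc M) * (2 * B * norm z ^ (qs M + 1)) + 2 * pi * B * norm z * (\<Sum>j. exp (- real j))"
    unfolding g_def suminf_add[OF summable_head summable_tail, symmetric]
      suminf_mult[OF summable_exp_minus_real, symmetric]
    by (subst suminf_finite[of "{..<Suc M}"]) auto
  have g_nonneg: "0 \<le> g j" for j
    using B_nonneg z unfolding g_def by simp
  have "norm (drift_term N z j) \<le> g j" if "j \<noteq> Suc M" for j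
  proof (cases "j < Suc M")
    case True
    then have "norm (drift_term N z j) \<le> 2 * B * norm z ^ (qs M + 1)"
      using norm_drift_term_le_head[OF z qs_mono[of j M]] by simp
    moreover have "0 \<le> 2 * pi * B * norm z * exp (- real j)"
      using B_nonneg by simp
    ultimately show ?thesis
      unfolding g_def if_P[OF True] by linarith
  next
    case False
    then show ?thesis
      using norm_drift_term_le_tail[OF order_refl tail(1,2)] that unfolding g_def by simp
  qed
  then have "norm (drift_term N z (Suc M)) - suminf g \<le> norm (drift N z)"
    unfolding drift_def by (rule norm_suminf_ge_term[OF summable_g g_nonneg])
  then show ?thesis
    using sum_g norm_drift_term_ge[OF turn r, of z] by linarith
qed

lemma drift_unbounded:
  assumes z: "1 < norm z" and r: "0 < r" "\<And>j. r \<le> norm (u (qs j))"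
  shows "\<exists>N. K \<le> norm (drift N z)"
proof -
  let ?\<rho> = "norm z"
  define C where "C = 2 * pi * B * ?\<rho> * (\<Sum>j. exp (- real j))"
  obtain J1 where J1: "\<And>j. J1 \<le> j \<Longrightarrow> ?\<rho> ^ qs j * real (qs j) * \<bar>err j\<bar> \<le> exp (- real j)"
    using eventually_err_small[of ?\<rho>] z unfolding eventually_sequentially by auto
  obtain J2 where J2: "\<And>j. J2 \<le> j \<Longrightarrow> 3 * qs j \<le> qs (Suc j)"
    using eventually_qs_Suc_ge unfolding eventually_sequentially by auto
  obtain J3 where J3: "\<And>n. J3 \<le> n \<Longrightarrow> K + C + 2 * B * ?\<rho> * (real n + 1) * ?\<rho> ^ n \<le> r * ?\<rho> * ?\<rho> ^ (3 * n)"
    using eventually_power_cube_dominates[OF z r(1), of "K + C" "2 * B * ?\<rho>"]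
    unfolding eventually_sequentially by auto
  define M where "M = max (max J1 J2) (max J3 3)"
  have "3 \<le> Suc M"
    unfolding M_def by simp
  then obtain N where turn: "1/4 \<le> real N * \<bar>err (Suc M)\<bar>" "real N * \<bar>err (Suc M)\<bar> \<le> 1/2"
    and N_le: "\<And>j. Suc M < j \<Longrightarrow> real N \<le> real (qs j)"
    by (rule exists_quarter_turn_qs) blast
  have lower: "r * ?\<rho> ^ (qs (Suc M) + 1) - (real (Suc M) * (2 * B * ?\<rho> ^ (qs M + 1)) + C) \<le> norm (drift N z)"
    unfolding C_def
  proof (rule norm_drift_ge[OF _ r(2) turn N_le])
    show "1 \<le> norm z"
      using z by simp
    show "norm z ^ qs j * real (qs j) * \<bar>err j\<bar> \<le> exp (- real j)" if "Suc M < j" for j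
      using J1 that unfolding M_def by simp
  qed
  have "J3 \<le> qs M"
    using qs_ge_index[of M] unfolding M_def by simp
  moreover have "3 * qs M \<le> qs (Suc M)"
    using J2 unfolding M_def by simp
  ultimately have "K \<le> r * ?\<rho> ^ (qs (Suc M) + 1) - (real (Suc M) * (2 * B * ?\<rho> ^ (qs M + 1)) + C)"
    using z r(1) B_nonneg qs_ge_index[of M] by (intro power_cube_dominates_le J3) auto
  then show ?thesis
    using lower by (intro exI[of _ N]) linarith
qed

lemma orbit_unbounded:
  assumes "1 < norm z" "0 < r" "\<And>j. r \<le> norm (u (qs j))"
  shows "\<not> bounded (range (\<lambda>N. (A_map \<theta> qs u ^^ N) (w, z)))"
proof
  assume "bounded (range (\<lambda>N. (A_map \<theta> qs u ^^ N) (w, z)))"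
  then obtain a where a: "\<And>N. norm ((A_map \<theta> qs u ^^ N) (w, z)) \<le> a"
    unfolding bounded_iff by blast
  obtain N where N: "a + norm w + 1 \<le> norm (drift N z)"
    using drift_unbounded[OF assms] by blast
  have "norm (w + drift N z) \<le> norm ((A_map \<theta> qs u ^^ N) (w, z))"
    unfolding A_map_iterate using norm_fst_le[of "rot \<theta> ^ N * (w + drift N z)" "rot \<theta> ^ N * z"]
    by (simp add: norm_mult norm_power)
  then show False
    using a[of N] N norm_triangle_ineq4[of "w + drift N z" w] by simp
qed

lemma not_in_fatou_set_if_norm_eq_1:
  assumes "norm z = 1" "0 < r" "\<And>j. r \<le> norm (u (qs j))"
  shows "(w, z) \<notin> fatou_set (A_map \<theta> qs u)"
proof
  assume "(w, z) \<in> fatou_set (A_map \<theta> qs u)"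
  then obtain d where "0 < d" and transfer:
    "\<And>y y'. y \<in> ball (w, z) d \<Longrightarrow> y' \<in> ball (w, z) d \<Longrightarrow>
      bounded (range (\<lambda>N. (A_map \<theta> qs u ^^ N) y)) \<Longrightarrow> bounded (range (\<lambda>N. (A_map \<theta> qs u ^^ N) y'))"
    by (rule fatou_set_bounded_orbit_nearby) blast
  define \<eta> where "\<eta> = min d 1 / 2"
  have \<eta>: "0 < \<eta>" "\<eta> < d" "\<eta> < 1"
    using \<open>0 < d\<close> unfolding \<eta>_def by auto
  have norm_scaled: "norm (of_real c * z) = \<bar>c\<bar>" for c
    using assms(1) by (simp add: norm_mult)
  have in_ball: "(w, of_real c * z) \<in> ball (w, z) d" if "\<bar>c - 1\<bar> < d" for c
  proof -
    have "dist (of_real c * z) z = \<bar>c - 1\<bar>"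
      using norm_scaled[of "c - 1"] by (simp add: dist_norm algebra_simps)
    then show ?thesis
      using that by (simp add: dist_Pair_Pair dist_commute)
  qed
  have "bounded (range (\<lambda>N. (A_map \<theta> qs u ^^ N) (w, of_real (1 - \<eta>) * z)))"
    using \<eta> norm_scaled[of "1 - \<eta>"] by (intro bounded_orbit_in_disc) simp
  then have "bounded (range (\<lambda>N. (A_map \<theta> qs u ^^ N) (w, of_real (1 + \<eta>) * z)))"
    using transfer[OF in_ball[of "1 - \<eta>"] in_ball[of "1 + \<eta>"]] \<eta> by simp
  moreover have "1 < norm (of_real (1 + \<eta>) * z)"
    using \<eta> norm_scaled[of "1 + \<eta>"] by simp
  ultimately show False
    using orbit_unbounded assms(2,3) by blast
qed

lemma disc_is_fatou_component:
  assumes "0 < r" "\<And>j. r \<le> norm (u (qs j))"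
  shows "is_fatou_component (A_map \<theta> qs u) (UNIV \<times> ball 0 1)"
  unfolding is_fatou_component_def
proof (rule in_components_if_frontier_disjoint)
  show "connected ((UNIV :: complex set) \<times> ball (0::complex) 1)"
    by (intro connected_Times connected_UNIV convex_connected convex_ball)
  show "frontier ((UNIV :: complex set) \<times> ball (0::complex) 1) \<inter> fatou_set (A_map \<theta> qs u) = {}"
  proof -
    have "frontier ((UNIV :: complex set) \<times> ball (0::complex) 1) \<subseteq> UNIV \<times> sphere 0 1"
      by (auto simp: frontier_def closure_Times interior_Times)
    then show ?thesis
      using not_in_fatou_set_if_norm_eq_1[OF _ assms] by fastforce
  qed
qed (auto simp: disc_subset_fatou_set)

end

section \<open>Generic coefficients\<close>

lemma (in rapid_convergents) disc_fatou_component_and_escape: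
  assumes "\<And>m. norm (u m) \<le> B" "0 < r" "\<And>m. r \<le> norm (u m)"
  shows "is_fatou_component (A_map \<theta> qs u) (UNIV \<times> ball 0 1) \<and>
    (\<forall>w z. 1 < norm z \<longrightarrow> \<not> bounded (range (\<lambda>N. (A_map \<theta> qs u ^^ N) (w, z))))"
proof -
  interpret bounded_coefficients \<theta> k u B
    by unfold_locales (rule assms(1))
  show ?thesis
    using disc_is_fatou_component orbit_unbounded assms(2,3) by blast
qed

definition nonvanishing_seqs :: "(nat \<Rightarrow>\<^sub>C complex) set" where
  "nonvanishing_seqs = {u. \<exists>r>0. \<forall>m. r \<le> norm (apply_bcontfun u m)}"

lemma open_nonvanishing_seqs: "open nonvanishing_seqs"
  unfolding open_contains_ball
proof
  fix u assume "u \<in> nonvanishing_seqs"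
  then obtain r where r: "0 < r" "\<And>m. r \<le> norm (apply_bcontfun u m)"
    unfolding nonvanishing_seqs_def by blast
  have "v \<in> nonvanishing_seqs" if "v \<in> ball u (r / 2)" for v
  proof -
    have "r / 2 \<le> norm (apply_bcontfun v m)" for m
    proof -
      have "norm (apply_bcontfun u m - apply_bcontfun v m) < r / 2"
        using dist_bounded[of u m v] that by (simp add: dist_norm)
      then show ?thesis
        using r(2)[of m] norm_triangle_ineq2[of "apply_bcontfun u m" "apply_bcontfun v m"] by linarith
    qed
    then show ?thesis
      unfolding nonvanishing_seqs_def using r(1) by (auto intro!: exI[of _ "r / 2"])
  qed
  then show "\<exists>e>0. ball u e \<subseteq> nonvanishing_seqs"
    using r(1) by (intro exI[of _ "r / 2"]) auto
qed

lemma dense_nonvanishing_seqs: "closure nonvanishing_seqs = UNIV"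
proof -
  have "\<exists>v\<in>nonvanishing_seqs. dist v u < e" if "0 < e" for u :: "nat \<Rightarrow>\<^sub>C complex" and e
  proof -
    define c where "c = e / 2"
    define f where "f m = apply_bcontfun u m + of_real c * (if apply_bcontfun u m = 0 then 1 else sgn (apply_bcontfun u m))" for m
    have c: "0 < c" "c < e"
      using that unfolding c_def by auto
    have norm_f: "norm (f m) = norm (apply_bcontfun u m) + c" for m
    proof (cases "apply_bcontfun u m = 0")
      case False
      then have "f m = of_real (norm (apply_bcontfun u m) + c) * sgn (apply_bcontfun u m)"
        unfolding f_def by (simp add: algebra_simps scaleR_conv_of_real sgn_div_norm)
      then have "norm (f m) = \<bar>norm (apply_bcontfun u m) + c\<bar>"
        using False by (simp only: norm_mult norm_sgn norm_of_real) simp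
      then show ?thesis
        using c by simp
    qed (use c in \<open>simp add: f_def\<close>)
    have dist_f: "dist (f m) (apply_bcontfun u m) = c" for m
      using c by (simp add: f_def dist_norm norm_mult norm_sgn)
    have "f \<in> bcontfun"
      by (rule bcontfun_normI[of _ "norm u + c"]) (simp_all add: norm_f norm_bounded)
    then have v: "apply_bcontfun (Bcontfun f) = f"
      by (simp add: Bcontfun_inverse)
    show ?thesis
    proof (intro bexI)
      show "dist (Bcontfun f) u < e"
        using dist_bound[of "Bcontfun f" u c] dist_f c by (simp add: v)
      show "Bcontfun f \<in> nonvanishing_seqs"
        unfolding nonvanishing_seqs_def using c by (auto intro!: exI[of _ c] simp: v norm_f)
    qed
  qed
  then show ?thesis
    by (auto simp: closure_approachable)
qed

lemma gdelta_nonvanishing_seqs: "gdelta nonvanishing_seqs"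
  using gdelta.intros[of "\<lambda>_. nonvanishing_seqs"] open_nonvanishing_seqs by simp

theorem theorem2p4:
  fixes \<theta> :: real and k :: "nat \<Rightarrow> nat"
  assumes irrat: "\<theta> \<notin> \<rat>"
    and growth: "filterlim (\<lambda>n. ln (real_of_int (cf_q \<theta> (Suc n))) / real_of_int (cf_q \<theta> n))
                   at_top sequentially"
    and subseq: "strict_mono k"
  defines "qs \<equiv> (\<lambda>n. nat (cf_q \<theta> (k n)))"
  shows "\<exists>E1 :: (nat \<Rightarrow>\<^sub>C complex) set. gdelta E1 \<and> closure E1 = UNIV \<and>
           (\<forall>u\<in>E1. is_fatou_component (A_map \<theta> qs (apply_bcontfun u)) (UNIV \<times> ball 0 1) \<and>
              (\<forall>w z. norm z > 1 \<longrightarrow>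
                 \<not> bounded (range (\<lambda>N. (A_map \<theta> qs (apply_bcontfun u) ^^ N) (w, z)))))
         \<and> is_fatou_component (A_map \<theta> qs (\<lambda>_. 1)) (UNIV \<times> ball 0 1)
         \<and> (\<forall>w z. norm z > 1 \<longrightarrow>
               \<not> bounded (range (\<lambda>N. (A_map \<theta> qs (\<lambda>_. 1) ^^ N) (w, z))))"
proof -
  have R: "rapid_convergents \<theta> k"
    using irrat growth subseq by unfold_locales
  have qs: "qs = rapid_convergents.qs \<theta> k"
    unfolding qs_def by (simp add: fun_eq_iff rapid_convergents.qs_def[OF R])
  have "is_fatou_component (A_map \<theta> qs (apply_bcontfun u)) (UNIV \<times> ball 0 1) \<and>
      (\<forall>w z. 1 < norm z \<longrightarrow> \<not> bounded (range (\<lambda>N. (A_map \<theta> qs (apply_bcontfun u) ^^ N) (w, z))))"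
    if u: "u \<in> nonvanishing_seqs" for u
  proof -
    obtain r where "0 < r" "\<And>m. r \<le> norm (apply_bcontfun u m)"
      using u unfolding nonvanishing_seqs_def by blast
    then show ?thesis
      unfolding qs by (rule rapid_convergents.disc_fatou_component_and_escape[OF R norm_bounded])
  qed
  moreover have "is_fatou_component (A_map \<theta> qs (\<lambda>_. 1)) (UNIV \<times> ball 0 1) \<and>
      (\<forall>w z. 1 < norm z \<longrightarrow> \<not> bounded (range (\<lambda>N. (A_map \<theta> qs (\<lambda>_. 1) ^^ N) (w, z))))"
    unfolding qs by (rule rapid_convergents.disc_fatou_component_and_escape[OF R, of _ 1 1]) auto
  ultimately show ?thesis
    using gdelta_nonvanishing_seqs dense_nonvanishing_seqs by blast
qed

end
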